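(* Let $H,K$ be Hilbert spaces, $m\geq 1$, and let $x_{1},\dots,x_{m}\in B(H)$ and $y_{1},\dots,y_{m}\in B(K)$ be self-adjoint contractions. Set $B=\sum_{i=1}^{m}x_{i}\otimes y_{i}\in B(H\otimes K)$. Then \[ \|B\|^{2}\leq m+\frac{1}{2}\sum_{1\leq i<j\leq m}\Big(\|[x_{i},x_{j}]\|\,\|[y_{i},y_{j}]\|+\|\{x_{i},x_{j}\}\|\,\|\{y_{i},y_{j}\}\|\Big). \] In particular, if for each pair $(i,j)$ either $\{x_{i},x_{j}\}=0$ or $\{y_{i},y_{j}\}=0$, then \[ \|B\|^{2}\leq m+\frac{1}{2}\sum_{i<j}\|[x_{i},x_{j}]\|\,\|[y_{i},y_{j}]\|. \]
   Context: $\|\cdot\|$ denotes the operator norm. $[a,b]=ab-ba$ is the commutator and $\{a,b\}=ab+ba$ the anticommutator. A contraction is an operator of norm at most $1$. *)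

theory Defs
  imports "HOL-Analysis.Analysis"
begin

text \<open>A complex Hilbert space is modelled concretely as l2(I) for an index type I
  (every complex Hilbert space is unitarily isomorphic to such a space, I being an
  orthonormal basis).
  The Hilbert tensor product l2(I) tensor l2(J) is l2(I x J).\<close>

definition l2 :: "('i \<Rightarrow> complex) set" where
  "l2 = {f. (\<lambda>i. (cmod (f i))\<^sup>2) summable_on UNIV}"

definition l2_inner :: "('i \<Rightarrow> complex) \<Rightarrow> ('i \<Rightarrow> complex) \<Rightarrow> complex" where
  "l2_inner f g = infsum (\<lambda>i. cnj (f i) * g i) UNIV"

definition l2_norm :: "('i \<Rightarrow> complex) \<Rightarrow> real" where
  "l2_norm f = sqrt (infsum (\<lambda>i. (cmod (f i))\<^sup>2) UNIV)"

text \<open>Operators on l2(I): only their action on l2(I) is relevant.\<close>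
type_synonym 'i op = "('i \<Rightarrow> complex) \<Rightarrow> ('i \<Rightarrow> complex)"

definition bounded_op :: "'i op \<Rightarrow> bool" where
  "bounded_op x \<longleftrightarrow>
     (\<forall>f\<in>l2. x f \<in> l2) \<and>
     (\<forall>f\<in>l2. \<forall>g\<in>l2. x (\<lambda>i. f i + g i) = (\<lambda>i. x f i + x g i)) \<and>
     (\<forall>f\<in>l2. \<forall>c. x (\<lambda>i. c * f i) = (\<lambda>i. c * x f i)) \<and>
     (\<exists>C. \<forall>f\<in>l2. l2_norm (x f) \<le> C * l2_norm f)"

definition op_norm :: "'i op \<Rightarrow> real" where
  "op_norm x = Sup {l2_norm (x f) | f. f \<in> l2 \<and> l2_norm f \<le> 1}"

definition self_adjoint :: "'i op \<Rightarrow> bool" where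
  "self_adjoint x \<longleftrightarrow> bounded_op x \<and>
     (\<forall>f\<in>l2. \<forall>g\<in>l2. l2_inner (x f) g = l2_inner f (x g))"

definition contraction :: "'i op \<Rightarrow> bool" where
  "contraction x \<longleftrightarrow> bounded_op x \<and> op_norm x \<le> 1"

text \<open>x tensor 1 and 1 tensor y on l2(I x J); x tensor y is their composition.\<close>
definition left_ext :: "'i op \<Rightarrow> ('i \<times> 'j) op" where
  "left_ext x F = (\<lambda>(i, j). x (\<lambda>k. F (k, j)) i)"

definition right_ext :: "'j op \<Rightarrow> ('i \<times> 'j) op" where
  "right_ext y F = (\<lambda>(i, j). y (\<lambda>l. F (i, l)) j)"

definition tensor_op :: "'i op \<Rightarrow> 'j op \<Rightarrow> ('i \<times> 'j) op" where
  "tensor_op x y = left_ext x \<circ> right_ext y"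

definition commutator :: "'i op \<Rightarrow> 'i op \<Rightarrow> 'i op" where
  "commutator a b = (\<lambda>f i. a (b f) i - b (a f) i)"

definition anticommutator :: "'i op \<Rightarrow> 'i op \<Rightarrow> 'i op" where
  "anticommutator a b = (\<lambda>f i. a (b f) i + b (a f) i)"

definition op_sum :: "nat \<Rightarrow> (nat \<Rightarrow> 'i op) \<Rightarrow> 'i op" where
  "op_sum m A = (\<lambda>f p. \<Sum>k<m. A k f p)"

end

theory Submission
  imports Defs
begin

(* B is self-adjoint, so Cauchy-Schwarz gives |B f|^2 = <f, B^2 f> <= |f| |B^2 f|, that is
   ||B||^2 <= ||B^2||.  Since x_i (x) 1 commutes with 1 (x) y_j, B^2 is the sum of the m terms
   x_i^2 (x) y_i^2, each of norm at most 1, and, for i < j, of the terms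
     x_i x_j (x) y_i y_j + x_j x_i (x) y_j y_i
       = ([x_i,x_j] (x) [y_i,y_j] + {x_i,x_j} (x) {y_i,y_j}) / 2,
   each of norm at most the corresponding summand of the bound. *)

section \<open>The space l2\<close>

lemma power2_norm_add_le:
  fixes a b :: "'a::real_normed_vector"
  shows "(norm (a + b))\<^sup>2 \<le> (norm a)\<^sup>2 + (norm b)\<^sup>2 + 2 * (norm a * norm b)"
  using power_mono[OF norm_triangle_ineq[of a b] norm_ge_zero, of 2] by (simp add: power2_sum)

lemma l2_summable: "f \<in> l2 \<Longrightarrow> (\<lambda>i. (cmod (f i))\<^sup>2) summable_on UNIV"
  by (simp add: l2_def)

lemma l2_norm_nonneg: "0 \<le> l2_norm f"
  unfolding l2_norm_def by (simp add: infsum_nonneg)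

lemma power2_l2_norm: "(l2_norm f)\<^sup>2 = (\<Sum>\<^sub>\<infinity>i. (cmod (f i))\<^sup>2)"
  unfolding l2_norm_def by (simp add: infsum_nonneg)

lemma has_sum_power2_l2_norm: "f \<in> l2 \<Longrightarrow> ((\<lambda>i. (cmod (f i))\<^sup>2) has_sum (l2_norm f)\<^sup>2) UNIV"
  unfolding power2_l2_norm by (rule has_sum_infsum, rule l2_summable)

lemma zero_in_l2 [simp]: "(\<lambda>_. 0) \<in> l2"
  and l2_norm_zero [simp]: "l2_norm (\<lambda>_. 0) = 0"
  by (auto simp: l2_def l2_norm_def)

lemma l2_norm_eq_0D:
  assumes "f \<in> l2" "l2_norm f = 0"
  shows "f = (\<lambda>_. 0)"
proof
  fix i
  have "(\<Sum>\<^sub>\<infinity>i. (cmod (f i))\<^sup>2) \<le> 0"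
    using assms(2) power2_l2_norm[of f] by simp
  then have "(cmod (f i))\<^sup>2 = 0"
    by (rule nonneg_infsum_le_0D) (use assms(1) l2_summable in auto)
  then show "f i = 0" by simp
qed

lemma l2_cmult:
  assumes "f \<in> l2"
  shows "(\<lambda>i. c * f i) \<in> l2"
    and "l2_norm (\<lambda>i. c * f i) = cmod c * l2_norm f"
proof -
  have sq: "(\<lambda>i. (cmod (c * f i))\<^sup>2) = (\<lambda>i. (cmod c)\<^sup>2 * (cmod (f i))\<^sup>2)"
    by (simp add: norm_mult power_mult_distrib)
  show "(\<lambda>i. c * f i) \<in> l2"
    unfolding l2_def using summable_on_cmult_right[OF l2_summable[OF assms]] sq by simp
  have "(l2_norm (\<lambda>i. c * f i))\<^sup>2 = (cmod c * l2_norm f)\<^sup>2"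
    unfolding power2_l2_norm sq power_mult_distrib by (simp add: infsum_cmult_right')
  then show "l2_norm (\<lambda>i. c * f i) = cmod c * l2_norm f"
    by (simp add: l2_norm_nonneg power2_eq_iff_nonneg)
qed

lemma l2_norm_mult_summable:
  assumes "f \<in> l2" "g \<in> l2"
  shows "(\<lambda>i. cmod (f i) * cmod (g i)) summable_on UNIV"
proof (rule summable_on_comparison_test)
  show "(\<lambda>i. (cmod (f i))\<^sup>2 + (cmod (g i))\<^sup>2) summable_on UNIV"
    using assms by (intro summable_on_add l2_summable)
  show "cmod (f i) * cmod (g i) \<le> (cmod (f i))\<^sup>2 + (cmod (g i))\<^sup>2" for i
    using sum_squares_bound[of "cmod (f i)" "cmod (g i)"]
      mult_nonneg_nonneg[of "cmod (f i)" "cmod (g i)"]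
    by (simp add: mult.assoc del: mult_nonneg_nonneg)
qed simp

lemma l2_add:
  assumes "f \<in> l2" "g \<in> l2"
  shows "(\<lambda>i. f i + g i) \<in> l2"
proof -
  have "(\<lambda>i. (cmod (f i))\<^sup>2 + (cmod (g i))\<^sup>2 + 2 * (cmod (f i) * cmod (g i))) summable_on UNIV"
    using assms by (intro summable_on_add summable_on_cmult_right l2_summable l2_norm_mult_summable)
  then have "(\<lambda>i. (cmod (f i + g i))\<^sup>2) summable_on UNIV"
    by (rule summable_on_comparison_test) (simp_all add: power2_norm_add_le)
  then show ?thesis unfolding l2_def by simp
qed

lemma l2_sum: "finite A \<Longrightarrow> (\<And>k. k \<in> A \<Longrightarrow> F k \<in> l2) \<Longrightarrow> (\<lambda>p. \<Sum>k\<in>A. F k p) \<in> l2"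
  by (induction A rule: finite_induct) (auto intro: l2_add)

text \<open>Cauchy-Schwarz, proved by summing the AM-GM inequality for the normalised moduli.\<close>
lemma infsum_norm_mult_le:
  assumes "f \<in> l2" "g \<in> l2"
  shows "(\<Sum>\<^sub>\<infinity>i. cmod (f i) * cmod (g i)) \<le> l2_norm f * l2_norm g"
proof (cases "l2_norm f = 0 \<or> l2_norm g = 0")
  case True
  then show ?thesis using l2_norm_eq_0D[OF assms(1)] l2_norm_eq_0D[OF assms(2)] by auto
next
  case False
  define a b where "a = l2_norm f" and "b = l2_norm g"
  have "a > 0" "b > 0" using False l2_norm_nonneg unfolding a_def b_def by (metis less_eq_real_def)+
  define S where "S = (\<Sum>\<^sub>\<infinity>i. cmod (f i) * cmod (g i))"
  have "((\<lambda>i. cmod (f i) * cmod (g i) / (a * b)) has_sum S / (a * b)) UNIV"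
    unfolding S_def by (intro has_sum_divide_const has_sum_infsum l2_norm_mult_summable assms)
  moreover have "((\<lambda>i. ((cmod (f i))\<^sup>2 / a\<^sup>2 + (cmod (g i))\<^sup>2 / b\<^sup>2) / 2)
      has_sum (a\<^sup>2 / a\<^sup>2 + b\<^sup>2 / b\<^sup>2) / 2) UNIV"
    unfolding a_def b_def by (intro has_sum_divide_const has_sum_add has_sum_power2_l2_norm assms)
  moreover have "cmod (f i) * cmod (g i) / (a * b)
      \<le> ((cmod (f i))\<^sup>2 / a\<^sup>2 + (cmod (g i))\<^sup>2 / b\<^sup>2) / 2" for i
    using sum_squares_bound[of "cmod (f i) / a" "cmod (g i) / b"]
    by (simp add: power_divide mult_ac)
  ultimately have "S / (a * b) \<le> (a\<^sup>2 / a\<^sup>2 + b\<^sup>2 / b\<^sup>2) / 2"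
    by (rule has_sum_mono)
  then show ?thesis
    using \<open>a > 0\<close> \<open>b > 0\<close> by (simp add: S_def a_def b_def field_simps)
qed

lemma l2_inner_summable:
  assumes "f \<in> l2" "g \<in> l2"
  shows "(\<lambda>i. cnj (f i) * g i) summable_on UNIV"
  using l2_norm_mult_summable[OF assms]
  by (simp add: summable_on_iff_abs_summable_on_complex norm_mult)

lemma l2_inner_cauchy_schwarz:
  assumes "f \<in> l2" "g \<in> l2"
  shows "cmod (l2_inner f g) \<le> l2_norm f * l2_norm g"
proof -
  have "cmod (l2_inner f g) \<le> (\<Sum>\<^sub>\<infinity>i. norm (cnj (f i) * g i))"
    unfolding l2_inner_def
    by (rule norm_infsum_bound) (use l2_norm_mult_summable[OF assms] in \<open>simp add: norm_mult\<close>)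
  also have "\<dots> \<le> l2_norm f * l2_norm g"
    using infsum_norm_mult_le[OF assms] by (simp add: norm_mult)
  finally show ?thesis .
qed

lemma l2_inner_self:
  assumes "f \<in> l2"
  shows "l2_inner f f = complex_of_real ((l2_norm f)\<^sup>2)"
proof -
  have "(\<lambda>i. cnj (f i) * f i) = (\<lambda>i. complex_of_real ((cmod (f i))\<^sup>2))"
    by (metis complex_norm_square mult.commute)
  moreover have "((\<lambda>i. complex_of_real ((cmod (f i))\<^sup>2))
      has_sum complex_of_real ((l2_norm f)\<^sup>2)) UNIV"
    by (rule has_sum_of_real, rule has_sum_power2_l2_norm[OF assms])
  ultimately show ?thesis
    unfolding l2_inner_def by (simp add: infsumI)
qed

lemma l2_inner_add_left:
  assumes "f \<in> l2" "g \<in> l2" "h \<in> l2"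
  shows "l2_inner (\<lambda>i. f i + g i) h = l2_inner f h + l2_inner g h"
  unfolding l2_inner_def
  using infsum_add[OF l2_inner_summable[OF assms(1,3)] l2_inner_summable[OF assms(2,3)]]
  by (simp add: distrib_right)

lemma l2_inner_add_right:
  assumes "f \<in> l2" "g \<in> l2" "h \<in> l2"
  shows "l2_inner h (\<lambda>i. f i + g i) = l2_inner h f + l2_inner h g"
  unfolding l2_inner_def
  using infsum_add[OF l2_inner_summable[OF assms(3,1)] l2_inner_summable[OF assms(3,2)]]
  by (simp add: distrib_left)

lemma l2_norm_triangle:
  assumes "f \<in> l2" "g \<in> l2"
  shows "l2_norm (\<lambda>i. f i + g i) \<le> l2_norm f + l2_norm g"
proof -
  let ?fg = "\<lambda>i. cmod (f i) * cmod (g i)"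
  have "((\<lambda>i. (cmod (f i + g i))\<^sup>2) has_sum (l2_norm (\<lambda>i. f i + g i))\<^sup>2) UNIV"
    by (rule has_sum_power2_l2_norm, rule l2_add[OF assms])
  moreover have "((\<lambda>i. (cmod (f i))\<^sup>2 + (cmod (g i))\<^sup>2 + 2 * ?fg i) has_sum
      (l2_norm f)\<^sup>2 + (l2_norm g)\<^sup>2 + 2 * (\<Sum>\<^sub>\<infinity>i. ?fg i)) UNIV"
    using assms
    by (intro has_sum_add has_sum_cmult_right has_sum_power2_l2_norm has_sum_infsum
        l2_norm_mult_summable)
  ultimately have "(l2_norm (\<lambda>i. f i + g i))\<^sup>2 \<le> (l2_norm f)\<^sup>2 + (l2_norm g)\<^sup>2 + 2 * (\<Sum>\<^sub>\<infinity>i. ?fg i)"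
    by (rule has_sum_mono) (rule power2_norm_add_le)
  also have "\<dots> \<le> (l2_norm f + l2_norm g)\<^sup>2"
    using infsum_norm_mult_le[OF assms] by (simp add: power2_sum)
  finally show ?thesis
    by (rule power2_le_imp_le) (simp add: l2_norm_nonneg)
qed

lemma l2_norm_sum_le:
  assumes "finite A" "\<And>k. k \<in> A \<Longrightarrow> F k \<in> l2" "\<And>k. k \<in> A \<Longrightarrow> l2_norm (F k) \<le> c k"
  shows "l2_norm (\<lambda>p. \<Sum>k\<in>A. F k p) \<le> (\<Sum>k\<in>A. c k)"
  using assms
proof (induction A rule: finite_induct)
  case (insert a A)
  then have "l2_norm (\<lambda>p. \<Sum>k\<in>insert a A. F k p) \<le> l2_norm (F a) + l2_norm (\<lambda>p. \<Sum>k\<in>A. F k p)"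
    by (simp add: l2_norm_triangle l2_sum)
  also have "\<dots> \<le> c a + (\<Sum>k\<in>A. c k)"
    using insert by (intro add_mono) auto
  finally show ?case using insert by simp
qed simp

section \<open>Bounded operators\<close>

lemma bounded_opI:
  assumes "\<And>f. f \<in> l2 \<Longrightarrow> x f \<in> l2"
    and "\<And>f g. f \<in> l2 \<Longrightarrow> g \<in> l2 \<Longrightarrow> x (\<lambda>i. f i + g i) = (\<lambda>i. x f i + x g i)"
    and "\<And>f c. f \<in> l2 \<Longrightarrow> x (\<lambda>i. c * f i) = (\<lambda>i. c * x f i)"
    and "\<And>f. f \<in> l2 \<Longrightarrow> l2_norm (x f) \<le> C * l2_norm f"
  shows "bounded_op x"
  unfolding bounded_op_def using assms by blast

lemma bounded_op_in_l2: "bounded_op x \<Longrightarrow> f \<in> l2 \<Longrightarrow> x f \<in> l2"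
  by (simp add: bounded_op_def)

lemma bounded_op_apply_add:
  "bounded_op x \<Longrightarrow> f \<in> l2 \<Longrightarrow> g \<in> l2 \<Longrightarrow> x (\<lambda>i. f i + g i) = (\<lambda>i. x f i + x g i)"
  by (simp add: bounded_op_def)

lemma bounded_op_apply_cmult: "bounded_op x \<Longrightarrow> f \<in> l2 \<Longrightarrow> x (\<lambda>i. c * f i) = (\<lambda>i. c * x f i)"
  by (simp add: bounded_op_def)

lemma bounded_op_apply_zero: "bounded_op x \<Longrightarrow> x (\<lambda>_. 0) = (\<lambda>_. 0)"
  using bounded_op_apply_cmult[of x "\<lambda>_. 0" 0] by simp

lemma bounded_op_apply_diff:
  assumes "bounded_op x" "f \<in> l2" "g \<in> l2"
  shows "x (\<lambda>i. f i - g i) = (\<lambda>i. x f i - x g i)"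
  using bounded_op_apply_add[OF assms(1,2) l2_cmult(1)[OF assms(3), of "-1"]]
    bounded_op_apply_cmult[OF assms(1,3), of "-1"]
  by simp

lemma bounded_op_apply_sum:
  assumes "bounded_op x"
  shows "finite A \<Longrightarrow> (\<And>k. k \<in> A \<Longrightarrow> G k \<in> l2) \<Longrightarrow> x (\<lambda>p. \<Sum>k\<in>A. G k p) = (\<lambda>p. \<Sum>k\<in>A. x (G k) p)"
proof (induction A rule: finite_induct)
  case (insert a A)
  then have "x (\<lambda>p. G a p + (\<Sum>k\<in>A. G k p)) = (\<lambda>p. x (G a) p + x (\<lambda>p. \<Sum>k\<in>A. G k p) p)"
    by (intro bounded_op_apply_add assms l2_sum) auto
  with insert show ?case by simp
qed (simp add: bounded_op_apply_zero[OF assms])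

lemma bdd_above_op_norm:
  assumes "bounded_op x"
  shows "bdd_above {l2_norm (x f) | f. f \<in> l2 \<and> l2_norm f \<le> 1}"
proof -
  obtain C where C: "\<forall>f\<in>l2. l2_norm (x f) \<le> C * l2_norm f"
    using assms unfolding bounded_op_def by blast
  have "C * l2_norm f \<le> \<bar>C\<bar>" if "l2_norm f \<le> 1" for f :: "'a \<Rightarrow> complex"
  proof -
    have "C * l2_norm f \<le> \<bar>C\<bar> * l2_norm f" by (simp add: l2_norm_nonneg mult_right_mono)
    also have "\<dots> \<le> \<bar>C\<bar>" using that l2_norm_nonneg[of f] by (simp add: mult_left_le)
    finally show ?thesis .
  qed
  with C show ?thesis by (auto intro!: bdd_aboveI[where M="\<bar>C\<bar>"] dest: order_trans)
qed

lemma l2_norm_apply_le_op_norm: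
  "bounded_op x \<Longrightarrow> f \<in> l2 \<Longrightarrow> l2_norm f \<le> 1 \<Longrightarrow> l2_norm (x f) \<le> op_norm x"
  unfolding op_norm_def by (rule cSup_upper) (auto intro: bdd_above_op_norm)

lemma op_norm_nonneg: "bounded_op x \<Longrightarrow> 0 \<le> op_norm x"
  using l2_norm_apply_le_op_norm[of x "\<lambda>_. 0"] by (simp add: bounded_op_apply_zero)

lemma l2_norm_apply_le:
  assumes "bounded_op x" "f \<in> l2"
  shows "l2_norm (x f) \<le> op_norm x * l2_norm f"
proof (cases "l2_norm f = 0")
  case True
  then show ?thesis
    using l2_norm_eq_0D[OF assms(2)] by (simp add: bounded_op_apply_zero[OF assms(1)])
next
  case False
  then have n: "l2_norm f > 0" using l2_norm_nonneg[of f] by linarith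
  let ?c = "complex_of_real (1 / l2_norm f)"
  have "l2_norm (\<lambda>i. ?c * f i) = 1"
    using n by (simp only: l2_cmult(2)[OF assms(2)]) (simp add: norm_divide)
  then have "l2_norm (x (\<lambda>i. ?c * f i)) \<le> op_norm x"
    by (intro l2_norm_apply_le_op_norm assms(1) l2_cmult(1)[OF assms(2)]) simp
  moreover have "l2_norm (x (\<lambda>i. ?c * f i)) = l2_norm (x f) / l2_norm f"
    using n
    by (simp only: bounded_op_apply_cmult[OF assms] l2_cmult(2)[OF bounded_op_in_l2[OF assms]])
      (simp add: norm_divide)
  ultimately have "l2_norm (x f) / l2_norm f \<le> op_norm x" by simp
  then show ?thesis using n by (simp add: field_simps)
qed

lemma op_norm_le:
  assumes "\<And>f. f \<in> l2 \<Longrightarrow> l2_norm f \<le> 1 \<Longrightarrow> l2_norm (x f) \<le> c"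
  shows "op_norm x \<le> c"
  unfolding op_norm_def
proof (rule cSup_least)
  show "{l2_norm (x f) |f. f \<in> l2 \<and> l2_norm f \<le> 1} \<noteq> {}"
    using zero_in_l2 l2_norm_zero by fastforce
qed (use assms in blast)

lemma op_norm_leI:
  assumes "\<And>f. f \<in> l2 \<Longrightarrow> l2_norm (x f) \<le> c * l2_norm f" "0 \<le> c"
  shows "op_norm x \<le> c"
  using assms by (intro op_norm_le) (meson mult_left_le order_trans)

lemma op_norm_eq_0I:
  assumes "\<And>f. f \<in> l2 \<Longrightarrow> x f = (\<lambda>_. 0)"
  shows "op_norm x = 0"
proof -
  have "{l2_norm (x f) |f. f \<in> l2 \<and> l2_norm f \<le> 1} = {0}"
  proof
    have "l2_norm (x (\<lambda>_. 0)) = 0" using assms[of "\<lambda>_. 0"] by simp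
    then show "{0} \<subseteq> {l2_norm (x f) |f. f \<in> l2 \<and> l2_norm f \<le> 1}"
      by (auto intro!: exI[of _ "\<lambda>_. 0"])
  qed (use assms in auto)
  then show ?thesis unfolding op_norm_def by simp
qed

lemma power2_op_norm_le:
  assumes "bounded_op x" "\<And>f. f \<in> l2 \<Longrightarrow> l2_norm f \<le> 1 \<Longrightarrow> (l2_norm (x f))\<^sup>2 \<le> K"
  shows "(op_norm x)\<^sup>2 \<le> K"
proof -
  have "0 \<le> K" using assms(2)[of "\<lambda>_. 0"] by (simp add: bounded_op_apply_zero[OF assms(1)])
  have "op_norm x \<le> sqrt K" by (rule op_norm_le) (simp add: assms(2) real_le_rsqrt)
  then show ?thesis
    using op_norm_nonneg[OF assms(1)] \<open>0 \<le> K\<close> by (metis power_mono real_sqrt_pow2)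
qed

lemma bounded_op_comp:
  fixes a b :: "'a op"
  assumes a: "bounded_op a" and b: "bounded_op b"
  shows "bounded_op (\<lambda>f. a (b f))"
proof (rule bounded_opI[where C="op_norm a * op_norm b"])
  fix f g :: "'a \<Rightarrow> complex" and c assume f: "f \<in> l2" and g: "g \<in> l2"
  have bf: "b f \<in> l2" and bg: "b g \<in> l2" using bounded_op_in_l2 b f g by blast+
  show "a (b f) \<in> l2" by (rule bounded_op_in_l2[OF a bf])
  show "a (b (\<lambda>i. f i + g i)) = (\<lambda>i. a (b f) i + a (b g) i)"
    by (simp add: bounded_op_apply_add[OF b f g] bounded_op_apply_add[OF a bf bg])
  show "a (b (\<lambda>i. c * f i)) = (\<lambda>i. c * a (b f) i)"
    by (simp add: bounded_op_apply_cmult[OF b f] bounded_op_apply_cmult[OF a bf])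
  have "l2_norm (a (b f)) \<le> op_norm a * l2_norm (b f)"
    by (rule l2_norm_apply_le[OF a bf])
  also have "\<dots> \<le> op_norm a * (op_norm b * l2_norm f)"
    by (intro mult_left_mono l2_norm_apply_le op_norm_nonneg a b f)
  finally show "l2_norm (a (b f)) \<le> op_norm a * op_norm b * l2_norm f" by (simp add: mult.assoc)
qed

lemma bounded_op_add:
  fixes a b :: "'a op"
  assumes a: "bounded_op a" and b: "bounded_op b"
  shows "bounded_op (\<lambda>f i. a f i + b f i)"
proof (rule bounded_opI[where C="op_norm a + op_norm b"])
  fix f g :: "'a \<Rightarrow> complex" and c assume f: "f \<in> l2" and g: "g \<in> l2"
  have af: "a f \<in> l2" and bf: "b f \<in> l2" using bounded_op_in_l2 a b f by blast+
  show "(\<lambda>i. a f i + b f i) \<in> l2" by (rule l2_add[OF af bf])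
  show "(\<lambda>i. a (\<lambda>i. f i + g i) i + b (\<lambda>i. f i + g i) i) = (\<lambda>i. (a f i + b f i) + (a g i + b g i))"
    by (simp add: bounded_op_apply_add[OF a f g] bounded_op_apply_add[OF b f g] algebra_simps)
  show "(\<lambda>i. a (\<lambda>i. c * f i) i + b (\<lambda>i. c * f i) i) = (\<lambda>i. c * (a f i + b f i))"
    by (simp add: bounded_op_apply_cmult[OF a f] bounded_op_apply_cmult[OF b f] algebra_simps)
  have "l2_norm (\<lambda>i. a f i + b f i) \<le> l2_norm (a f) + l2_norm (b f)"
    by (rule l2_norm_triangle[OF af bf])
  also have "\<dots> \<le> (op_norm a + op_norm b) * l2_norm f"
    using l2_norm_apply_le[OF a f] l2_norm_apply_le[OF b f] by (simp add: distrib_right)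
  finally show "l2_norm (\<lambda>i. a f i + b f i) \<le> (op_norm a + op_norm b) * l2_norm f" .
qed

lemma bounded_op_cmult:
  fixes a :: "'a op"
  assumes a: "bounded_op a"
  shows "bounded_op (\<lambda>f i. c * a f i)"
proof (rule bounded_opI[where C="cmod c * op_norm a"])
  fix f g :: "'a \<Rightarrow> complex" and d assume f: "f \<in> l2" and g: "g \<in> l2"
  have af: "a f \<in> l2" by (rule bounded_op_in_l2[OF a f])
  show "(\<lambda>i. c * a f i) \<in> l2" by (rule l2_cmult(1)[OF af])
  show "(\<lambda>i. c * a (\<lambda>i. f i + g i) i) = (\<lambda>i. c * a f i + c * a g i)"
    by (simp add: bounded_op_apply_add[OF a f g] algebra_simps)
  show "(\<lambda>i. c * a (\<lambda>i. d * f i) i) = (\<lambda>i. d * (c * a f i))"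
    by (simp add: bounded_op_apply_cmult[OF a f] algebra_simps)
  show "l2_norm (\<lambda>i. c * a f i) \<le> cmod c * op_norm a * l2_norm f"
    using l2_norm_apply_le[OF a f] by (simp add: l2_cmult(2)[OF af] mult.assoc mult_left_mono)
qed

lemma bounded_op_diff:
  fixes a b :: "'a op"
  assumes "bounded_op a" "bounded_op b"
  shows "bounded_op (\<lambda>f i. a f i - b f i)"
  using bounded_op_add[OF assms(1) bounded_op_cmult[OF assms(2), of "-1"]] by simp

lemma bounded_op_commutator:
  assumes "bounded_op a" "bounded_op b"
  shows "bounded_op (commutator a b)"
  unfolding commutator_def using assms by (simp add: bounded_op_diff bounded_op_comp)

lemma bounded_op_anticommutator:
  assumes "bounded_op a" "bounded_op b"
  shows "bounded_op (anticommutator a b)"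
  unfolding anticommutator_def using assms by (simp add: bounded_op_add bounded_op_comp)

lemma op_sum_Suc: "op_sum (Suc m) A = (\<lambda>f p. op_sum m A f p + A m f p)"
  by (simp add: op_sum_def)

lemma bounded_op_op_sum: "(\<And>k. k < m \<Longrightarrow> bounded_op (A k)) \<Longrightarrow> bounded_op (op_sum m A)"
proof (induction m)
  case 0
  show ?case by (rule bounded_opI[where C=0]) (simp_all add: op_sum_def)
next
  case (Suc m)
  then show ?case unfolding op_sum_Suc by (intro bounded_op_add) auto
qed

lemma self_adjoint_bounded: "self_adjoint x \<Longrightarrow> bounded_op x"
  by (simp add: self_adjoint_def)

lemma self_adjoint_symmetric:
  "self_adjoint x \<Longrightarrow> f \<in> l2 \<Longrightarrow> g \<in> l2 \<Longrightarrow> l2_inner (x f) g = l2_inner f (x g)"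
  by (simp add: self_adjoint_def)

lemma self_adjoint_add:
  fixes a b :: "'a op"
  assumes a: "self_adjoint a" and b: "self_adjoint b"
  shows "self_adjoint (\<lambda>f i. a f i + b f i)"
  unfolding self_adjoint_def
proof (intro conjI ballI)
  note a_bdd = self_adjoint_bounded[OF a] and b_bdd = self_adjoint_bounded[OF b]
  show "bounded_op (\<lambda>f i. a f i + b f i)" by (rule bounded_op_add[OF a_bdd b_bdd])
  fix f g :: "'a \<Rightarrow> complex" assume f: "f \<in> l2" and g: "g \<in> l2"
  show "l2_inner (\<lambda>i. a f i + b f i) g = l2_inner f (\<lambda>i. a g i + b g i)"
    using bounded_op_in_l2[OF a_bdd] bounded_op_in_l2[OF b_bdd] f g
    by (simp add: l2_inner_add_left l2_inner_add_right
        self_adjoint_symmetric[OF a] self_adjoint_symmetric[OF b])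
qed

lemma self_adjoint_op_sum: "(\<And>k. k < m \<Longrightarrow> self_adjoint (A k)) \<Longrightarrow> self_adjoint (op_sum m A)"
proof (induction m)
  case 0
  show ?case
    using bounded_op_op_sum[of 0 A] by (simp add: self_adjoint_def op_sum_def l2_inner_def)
next
  case (Suc m)
  then show ?case unfolding op_sum_Suc by (intro self_adjoint_add) auto
qed

lemma power2_op_norm_le_op_norm_square:
  fixes x :: "'a op"
  assumes x: "self_adjoint x"
  shows "(op_norm x)\<^sup>2 \<le> op_norm (\<lambda>f. x (x f))"
proof (rule power2_op_norm_le[OF self_adjoint_bounded[OF x]])
  note x_bdd = self_adjoint_bounded[OF x]
  fix f :: "'a \<Rightarrow> complex" assume f: "f \<in> l2" and f1: "l2_norm f \<le> 1"
  have xf: "x f \<in> l2" by (rule bounded_op_in_l2[OF x_bdd f])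
  have "(l2_norm (x f))\<^sup>2 = cmod (l2_inner (x f) (x f))"
    unfolding l2_inner_self[OF xf] norm_of_real by simp
  also have "\<dots> = cmod (l2_inner f (x (x f)))"
    by (simp add: self_adjoint_symmetric[OF x f xf])
  also have "\<dots> \<le> l2_norm f * l2_norm (x (x f))"
    by (rule l2_inner_cauchy_schwarz[OF f bounded_op_in_l2[OF x_bdd xf]])
  also have "\<dots> \<le> l2_norm (x (x f))"
    using f1 by (simp add: mult_left_le_one_le l2_norm_nonneg)
  also have "\<dots> \<le> op_norm (\<lambda>f. x (x f))"
    by (rule l2_norm_apply_le_op_norm[OF bounded_op_comp[OF x_bdd x_bdd] f f1])
  finally show "(l2_norm (x f))\<^sup>2 \<le> op_norm (\<lambda>f. x (x f))" .
qed

section \<open>Operators on a tensor product\<close>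

lemma l2_comp_swap: "F \<in> l2 \<Longrightarrow> (\<lambda>p. F (prod.swap p)) \<in> l2"
  unfolding l2_def using summable_on_reindex_bij_betw[OF bij_swap, of "\<lambda>p. (cmod (F p))\<^sup>2"] by simp

lemma l2_norm_comp_swap: "l2_norm (\<lambda>p. F (prod.swap p)) = l2_norm F"
  unfolding l2_norm_def using infsum_reindex_bij_betw[OF bij_swap, of "\<lambda>p. (cmod (F p))\<^sup>2"] by simp

lemma l2_inner_comp_swap: "l2_inner (\<lambda>p. F (prod.swap p)) (\<lambda>p. G (prod.swap p)) = l2_inner F G"
  unfolding l2_inner_def
  using infsum_reindex_bij_betw[OF bij_swap, of "\<lambda>p. cnj (F p) * G p"] by simp

lemma l2_row:
  assumes "F \<in> l2"
  shows "(\<lambda>l. F (i, l)) \<in> l2"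
proof -
  have "(\<lambda>(k, l). (cmod (F (k, l)))\<^sup>2) summable_on UNIV \<times> UNIV"
    using l2_summable[OF assms] by (simp add: case_prod_beta')
  from summable_on_SigmaD1[where f="\<lambda>k l. (cmod (F (k, l)))\<^sup>2", OF this]
  show ?thesis unfolding l2_def by simp
qed

lemma l2_column: "F \<in> l2 \<Longrightarrow> (\<lambda>k. F (k, j)) \<in> l2"
  using l2_row[OF l2_comp_swap, of F j] by simp

lemma has_sum_power2_l2_norm_rows:
  assumes "F \<in> l2"
  shows "((\<lambda>i. (l2_norm (\<lambda>l. F (i, l)))\<^sup>2) has_sum (l2_norm F)\<^sup>2) UNIV"
proof -
  have F: "(\<lambda>p. (cmod (F p))\<^sup>2) summable_on UNIV \<times> UNIV"
    using l2_summable[OF assms] by simp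
  have "(\<lambda>i. (l2_norm (\<lambda>l. F (i, l)))\<^sup>2) summable_on UNIV"
    unfolding power2_l2_norm
    by (rule summable_on_SigmaD[OF F]) (use l2_row[OF assms] in \<open>simp add: l2_def\<close>)
  then show ?thesis
    unfolding power2_l2_norm using infsum_Sigma_banach[OF F]
    by (metis UNIV_Times_UNIV has_sum_infsum)
qed

lemma l2_of_rows:
  assumes "\<And>i. (\<lambda>l. F (i, l)) \<in> l2"
    and "(\<lambda>i. (l2_norm (\<lambda>l. F (i, l)))\<^sup>2) summable_on UNIV"
  shows "F \<in> l2"
proof -
  have "(\<lambda>p. (cmod (F p))\<^sup>2) summable_on UNIV \<times> UNIV"
    by (rule summable_on_SigmaI[where g="\<lambda>i. (l2_norm (\<lambda>l. F (i, l)))\<^sup>2"])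
      (use assms has_sum_power2_l2_norm in auto)
  then show ?thesis unfolding l2_def by simp
qed

lemma l2_inner_rows:
  assumes "F \<in> l2" "G \<in> l2"
  shows "l2_inner F G = (\<Sum>\<^sub>\<infinity>i. l2_inner (\<lambda>l. F (i, l)) (\<lambda>l. G (i, l)))"
proof -
  have "(\<lambda>p. cnj (F p) * G p) summable_on UNIV \<times> UNIV"
    using l2_inner_summable[OF assms] by simp
  from infsum_Sigma_banach[OF this] show ?thesis unfolding l2_inner_def by simp
qed

lemma l2_inner_columns:
  assumes "F \<in> l2" "G \<in> l2"
  shows "l2_inner F G = (\<Sum>\<^sub>\<infinity>j. l2_inner (\<lambda>k. F (k, j)) (\<lambda>k. G (k, j)))"
  using l2_inner_rows[OF l2_comp_swap[OF assms(1)] l2_comp_swap[OF assms(2)]]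
  by (simp add: l2_inner_comp_swap)

lemma right_ext_row: "(\<lambda>l. right_ext y F (i, l)) = y (\<lambda>l. F (i, l))"
  by (simp add: right_ext_def)

lemma left_ext_column: "(\<lambda>k. left_ext x F (k, j)) = x (\<lambda>k. F (k, j))"
  by (simp add: left_ext_def)

lemma left_ext_eq_right_ext_swap:
  "left_ext x F = (\<lambda>p. right_ext x (\<lambda>q. F (prod.swap q)) (prod.swap p))"
  by (rule ext) (clarsimp simp: left_ext_def right_ext_def)

lemma right_ext_l2_bound:
  assumes y: "bounded_op y" and F: "F \<in> l2"
  shows "right_ext y F \<in> l2" "l2_norm (right_ext y F) \<le> op_norm y * l2_norm F"
proof -
  let ?H = "right_ext y F"
  have rows: "(\<lambda>l. ?H (i, l)) \<in> l2" for i
    unfolding right_ext_row by (rule bounded_op_in_l2[OF y l2_row[OF F]])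
  have le: "(l2_norm (\<lambda>l. ?H (i, l)))\<^sup>2 \<le> (op_norm y)\<^sup>2 * (l2_norm (\<lambda>l. F (i, l)))\<^sup>2" for i
    unfolding right_ext_row power_mult_distrib[symmetric]
    by (intro power_mono l2_norm_apply_le[OF y l2_row[OF F]] l2_norm_nonneg)
  have F_rows: "((\<lambda>i. (op_norm y)\<^sup>2 * (l2_norm (\<lambda>l. F (i, l)))\<^sup>2)
      has_sum (op_norm y)\<^sup>2 * (l2_norm F)\<^sup>2) UNIV"
    by (intro has_sum_cmult_right has_sum_power2_l2_norm_rows F)
  have "(\<lambda>i. (l2_norm (\<lambda>l. ?H (i, l)))\<^sup>2) summable_on UNIV"
    by (rule summable_on_comparison_test[OF has_sum_imp_summable[OF F_rows]]) (use le in auto)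
  then show H: "?H \<in> l2" by (rule l2_of_rows[OF rows])
  have "(l2_norm ?H)\<^sup>2 \<le> (op_norm y)\<^sup>2 * (l2_norm F)\<^sup>2"
    using has_sum_power2_l2_norm_rows[OF H] F_rows le by (rule has_sum_mono)
  then show "l2_norm ?H \<le> op_norm y * l2_norm F"
    unfolding power_mult_distrib[symmetric]
    by (rule power2_le_imp_le) (simp add: op_norm_nonneg[OF y] l2_norm_nonneg)
qed

lemma left_ext_l2_bound:
  assumes "bounded_op x" "F \<in> l2"
  shows "left_ext x F \<in> l2" "l2_norm (left_ext x F) \<le> op_norm x * l2_norm F"
proof -
  note swapped = right_ext_l2_bound[OF assms(1) l2_comp_swap[OF assms(2)]]
  show "left_ext x F \<in> l2"
    unfolding left_ext_eq_right_ext_swap by (rule l2_comp_swap[OF swapped(1)])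
  show "l2_norm (left_ext x F) \<le> op_norm x * l2_norm F"
    using swapped(2) by (simp only: left_ext_eq_right_ext_swap l2_norm_comp_swap)
qed

lemma bounded_op_right_ext:
  fixes y :: "'b op"
  assumes y: "bounded_op y"
  shows "bounded_op (right_ext y :: ('a \<times> 'b) op)"
proof (rule bounded_opI[where C="op_norm y"])
  fix F G :: "'a \<times> 'b \<Rightarrow> complex" and c assume F: "F \<in> l2" and G: "G \<in> l2"
  show "right_ext y F \<in> l2" "l2_norm (right_ext y F) \<le> op_norm y * l2_norm F"
    by (rule right_ext_l2_bound[OF y F])+
  show "right_ext y (\<lambda>p. F p + G p) = (\<lambda>p. right_ext y F p + right_ext y G p)"
    using bounded_op_apply_add[OF y l2_row[OF F] l2_row[OF G]] by (auto simp: right_ext_def)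
  show "right_ext y (\<lambda>p. c * F p) = (\<lambda>p. c * right_ext y F p)"
    using bounded_op_apply_cmult[OF y l2_row[OF F]] by (auto simp: right_ext_def)
qed

lemma bounded_op_left_ext:
  fixes x :: "'a op"
  assumes x: "bounded_op x"
  shows "bounded_op (left_ext x :: ('a \<times> 'b) op)"
proof (rule bounded_opI[where C="op_norm x"])
  fix F G :: "'a \<times> 'b \<Rightarrow> complex" and c assume F: "F \<in> l2" and G: "G \<in> l2"
  show "left_ext x F \<in> l2" "l2_norm (left_ext x F) \<le> op_norm x * l2_norm F"
    by (rule left_ext_l2_bound[OF x F])+
  show "left_ext x (\<lambda>p. F p + G p) = (\<lambda>p. left_ext x F p + left_ext x G p)"
    using bounded_op_apply_add[OF x l2_column[OF F] l2_column[OF G]] by (auto simp: left_ext_def)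
  show "left_ext x (\<lambda>p. c * F p) = (\<lambda>p. c * left_ext x F p)"
    using bounded_op_apply_cmult[OF x l2_column[OF F]] by (auto simp: left_ext_def)
qed

lemma tensor_op_apply: "tensor_op x y F = left_ext x (right_ext y F)"
  by (simp add: tensor_op_def)

lemma tensor_op_l2_bound:
  assumes "bounded_op x" "bounded_op y" "F \<in> l2"
  shows "tensor_op x y F \<in> l2" "l2_norm (tensor_op x y F) \<le> op_norm x * op_norm y * l2_norm F"
proof -
  note R = right_ext_l2_bound[OF assms(2,3)]
  show "tensor_op x y F \<in> l2"
    unfolding tensor_op_apply by (rule left_ext_l2_bound(1)[OF assms(1) R(1)])
  have "l2_norm (tensor_op x y F) \<le> op_norm x * l2_norm (right_ext y F)"
    unfolding tensor_op_apply by (rule left_ext_l2_bound(2)[OF assms(1) R(1)])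
  also have "\<dots> \<le> op_norm x * (op_norm y * l2_norm F)"
    by (rule mult_left_mono[OF R(2) op_norm_nonneg[OF assms(1)]])
  finally show "l2_norm (tensor_op x y F) \<le> op_norm x * op_norm y * l2_norm F"
    by (simp add: mult.assoc)
qed

lemma bounded_op_tensor_op: "bounded_op x \<Longrightarrow> bounded_op y \<Longrightarrow> bounded_op (tensor_op x y)"
  unfolding tensor_op_def o_def
  by (rule bounded_op_comp[OF bounded_op_left_ext bounded_op_right_ext])

definition basis_vec :: "'i \<Rightarrow> 'i \<Rightarrow> complex" where
  "basis_vec i = (\<lambda>k. if k = i then 1 else 0)"

lemma basis_vec_in_l2: "basis_vec i \<in> l2"
proof -
  have "((\<lambda>k. (cmod (basis_vec i k))\<^sup>2) has_sum (\<Sum>k\<in>{i}. (cmod (basis_vec i k))\<^sup>2)) UNIV"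
    by (rule has_sum_finite_neutralI[where B="{i}"]) (auto simp: basis_vec_def)
  then show ?thesis unfolding l2_def summable_on_def by blast
qed

lemma l2_inner_basis_vec: "l2_inner (basis_vec i) f = f i"
  unfolding l2_inner_def
  by (rule infsumI, rule has_sum_finite_neutralI[where B="{i}"]) (auto simp: basis_vec_def)

lemma self_adjoint_apply_eq_l2_inner:
  assumes "self_adjoint x" "f \<in> l2"
  shows "x f i = l2_inner (x (basis_vec i)) f"
proof -
  have "x f i = l2_inner (basis_vec i) (x f)" by (rule l2_inner_basis_vec[symmetric])
  also have "\<dots> = l2_inner (x (basis_vec i)) f"
    by (rule self_adjoint_symmetric[OF assms(1) basis_vec_in_l2 assms(2), symmetric])
  finally show ?thesis .
qed

lemma l2_product:
  assumes "a \<in> l2" "b \<in> l2"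
  shows "(\<lambda>(k, l). a k * b l) \<in> l2"
proof (rule l2_of_rows)
  show "(\<lambda>l. case (k, l) of (k, l) \<Rightarrow> a k * b l) \<in> l2" for k
    using l2_cmult(1)[OF assms(2)] by simp
  show "(\<lambda>k. (l2_norm (\<lambda>l. case (k, l) of (k, l) \<Rightarrow> a k * b l))\<^sup>2) summable_on UNIV"
    using summable_on_cmult_left[OF l2_summable[OF assms(1)]]
    by (simp add: l2_cmult(2)[OF assms(2)] power_mult_distrib)
qed

lemma l2_inner_product_iterated:
  assumes a: "a \<in> l2" and b: "b \<in> l2" and F: "F \<in> l2"
  shows "l2_inner a (\<lambda>k. l2_inner b (\<lambda>l. F (k, l))) = l2_inner (\<lambda>(k, l). a k * b l) F"
    and "l2_inner b (\<lambda>l. l2_inner a (\<lambda>k. F (k, l))) = l2_inner (\<lambda>(k, l). a k * b l) F"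
proof -
  note ab = l2_product[OF a b]
  show "l2_inner a (\<lambda>k. l2_inner b (\<lambda>l. F (k, l))) = l2_inner (\<lambda>(k, l). a k * b l) F"
    unfolding l2_inner_rows[OF ab F] by (simp add: l2_inner_def infsum_cmult_right' mult.assoc)
  show "l2_inner b (\<lambda>l. l2_inner a (\<lambda>k. F (k, l))) = l2_inner (\<lambda>(k, l). a k * b l) F"
    unfolding l2_inner_columns[OF ab F]
    by (simp add: l2_inner_def infsum_cmult_right'[symmetric] mult.left_commute mult.assoc)
qed

text \<open>Self-adjointness turns the matrix coefficients of x and y into inner products, and then
  both sides are the inner product of F with the product vector of x (basis_vec i) and
  y (basis_vec j), computed row by row resp. column by column.\<close>
lemma left_ext_right_ext_commute:
  assumes x: "self_adjoint x" and y: "self_adjoint y" and F: "F \<in> l2"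
  shows "left_ext x (right_ext y F) = right_ext y (left_ext x F)"
proof (rule ext, clarify)
  fix i j
  note x_bdd = self_adjoint_bounded[OF x] and y_bdd = self_adjoint_bounded[OF y]
  define a b where "a = x (basis_vec i)" and "b = y (basis_vec j)"
  have "a \<in> l2" "b \<in> l2"
    unfolding a_def b_def
    by (rule bounded_op_in_l2[OF x_bdd basis_vec_in_l2], rule bounded_op_in_l2[OF y_bdd basis_vec_in_l2])
  have yF: "right_ext y F \<in> l2" and xF: "left_ext x F \<in> l2"
    by (rule right_ext_l2_bound(1)[OF y_bdd F], rule left_ext_l2_bound(1)[OF x_bdd F])
  have "left_ext x (right_ext y F) (i, j) = l2_inner a (\<lambda>k. l2_inner b (\<lambda>l. F (k, l)))"
    using self_adjoint_apply_eq_l2_inner[OF x l2_column[OF yF]]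
      self_adjoint_apply_eq_l2_inner[OF y l2_row[OF F]]
    by (simp add: left_ext_def right_ext_def a_def b_def)
  also have "\<dots> = l2_inner b (\<lambda>l. l2_inner a (\<lambda>k. F (k, l)))"
    using l2_inner_product_iterated[OF \<open>a \<in> l2\<close> \<open>b \<in> l2\<close> F] by simp
  also have "\<dots> = right_ext y (left_ext x F) (i, j)"
    using self_adjoint_apply_eq_l2_inner[OF y l2_row[OF xF]]
      self_adjoint_apply_eq_l2_inner[OF x l2_column[OF F]]
    by (simp add: left_ext_def right_ext_def a_def b_def)
  finally show "left_ext x (right_ext y F) (i, j) = right_ext y (left_ext x F) (i, j)" .
qed

lemma self_adjoint_right_ext:
  assumes y: "self_adjoint y"
  shows "self_adjoint (right_ext y :: ('a \<times> 'b) op)"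
  unfolding self_adjoint_def
proof (intro conjI ballI)
  note y_bdd = self_adjoint_bounded[OF y]
  show "bounded_op (right_ext y :: ('a \<times> 'b) op)" by (rule bounded_op_right_ext[OF y_bdd])
  fix F G :: "'a \<times> 'b \<Rightarrow> complex" assume F: "F \<in> l2" and G: "G \<in> l2"
  have "l2_inner (right_ext y F) G = (\<Sum>\<^sub>\<infinity>i. l2_inner (y (\<lambda>l. F (i, l))) (\<lambda>l. G (i, l)))"
    using l2_inner_rows[OF right_ext_l2_bound(1)[OF y_bdd F] G] by (simp add: right_ext_row)
  also have "\<dots> = (\<Sum>\<^sub>\<infinity>i. l2_inner (\<lambda>l. F (i, l)) (y (\<lambda>l. G (i, l))))"
    by (simp add: self_adjoint_symmetric[OF y l2_row[OF F] l2_row[OF G]])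
  also have "\<dots> = l2_inner F (right_ext y G)"
    using l2_inner_rows[OF F right_ext_l2_bound(1)[OF y_bdd G]] by (simp add: right_ext_row)
  finally show "l2_inner (right_ext y F) G = l2_inner F (right_ext y G)" .
qed

lemma self_adjoint_left_ext:
  assumes x: "self_adjoint x"
  shows "self_adjoint (left_ext x :: ('a \<times> 'b) op)"
  unfolding self_adjoint_def
proof (intro conjI ballI)
  note x_bdd = self_adjoint_bounded[OF x]
  show "bounded_op (left_ext x :: ('a \<times> 'b) op)" by (rule bounded_op_left_ext[OF x_bdd])
  fix F G :: "'a \<times> 'b \<Rightarrow> complex" assume F: "F \<in> l2" and G: "G \<in> l2"
  have "l2_inner (left_ext x F) G = (\<Sum>\<^sub>\<infinity>j. l2_inner (x (\<lambda>k. F (k, j))) (\<lambda>k. G (k, j)))"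
    using l2_inner_columns[OF left_ext_l2_bound(1)[OF x_bdd F] G] by (simp add: left_ext_column)
  also have "\<dots> = (\<Sum>\<^sub>\<infinity>j. l2_inner (\<lambda>k. F (k, j)) (x (\<lambda>k. G (k, j))))"
    by (simp add: self_adjoint_symmetric[OF x l2_column[OF F] l2_column[OF G]])
  also have "\<dots> = l2_inner F (left_ext x G)"
    using l2_inner_columns[OF F left_ext_l2_bound(1)[OF x_bdd G]] by (simp add: left_ext_column)
  finally show "l2_inner (left_ext x F) G = l2_inner F (left_ext x G)" .
qed

lemma self_adjoint_tensor_op:
  assumes x: "self_adjoint x" and y: "self_adjoint y"
  shows "self_adjoint (tensor_op x y)"
  unfolding self_adjoint_def
proof (intro conjI ballI)
  note x_bdd = self_adjoint_bounded[OF x] and y_bdd = self_adjoint_bounded[OF y]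
  show "bounded_op (tensor_op x y)" by (rule bounded_op_tensor_op[OF x_bdd y_bdd])
  fix F G :: "'a \<times> 'b \<Rightarrow> complex" assume F: "F \<in> l2" and G: "G \<in> l2"
  have "l2_inner (tensor_op x y F) G = l2_inner (right_ext y F) (left_ext x G)"
    unfolding tensor_op_apply
    by (rule self_adjoint_symmetric[OF self_adjoint_left_ext[OF x]
          right_ext_l2_bound(1)[OF y_bdd F] G])
  also have "\<dots> = l2_inner F (right_ext y (left_ext x G))"
    by (rule self_adjoint_symmetric[OF self_adjoint_right_ext[OF y] F
          left_ext_l2_bound(1)[OF x_bdd G]])
  also have "\<dots> = l2_inner F (tensor_op x y G)"
    by (simp add: tensor_op_apply left_ext_right_ext_commute[OF x y G])
  finally show "l2_inner (tensor_op x y F) G = l2_inner F (tensor_op x y G)" .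
qed

lemma left_ext_comp: "left_ext (\<lambda>f. a (b f)) F = left_ext a (left_ext b F)"
  by (auto simp: left_ext_def)

lemma right_ext_comp: "right_ext (\<lambda>f. c (d f)) F = right_ext c (right_ext d F)"
  by (auto simp: right_ext_def)

lemma tensor_op_comp:
  assumes "self_adjoint b" "self_adjoint c" "bounded_op d" "F \<in> l2"
  shows "tensor_op a c (tensor_op b d F) = tensor_op (\<lambda>f. a (b f)) (\<lambda>f. c (d f)) F"
  using left_ext_right_ext_commute[OF assms(1,2) right_ext_l2_bound(1)[OF assms(3,4)]]
  by (simp add: tensor_op_apply left_ext_comp right_ext_comp)

lemma tensor_op_add_left:
  "tensor_op (\<lambda>f i. a f i + b f i) c F = (\<lambda>p. tensor_op a c F p + tensor_op b c F p)"
  by (auto simp: tensor_op_apply left_ext_def)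

lemma tensor_op_diff_left:
  "tensor_op (\<lambda>f i. a f i - b f i) c F = (\<lambda>p. tensor_op a c F p - tensor_op b c F p)"
  by (auto simp: tensor_op_apply left_ext_def)

lemma tensor_op_add_right:
  assumes "bounded_op a" "bounded_op c" "bounded_op d" "F \<in> l2"
  shows "tensor_op a (\<lambda>f i. c f i + d f i) F = (\<lambda>p. tensor_op a c F p + tensor_op a d F p)"
proof -
  have "right_ext (\<lambda>f i. c f i + d f i) F = (\<lambda>p. right_ext c F p + right_ext d F p)"
    by (auto simp: right_ext_def)
  then show ?thesis
    unfolding tensor_op_apply
    by (simp add: bounded_op_apply_add[OF bounded_op_left_ext[OF assms(1)]]
        right_ext_l2_bound assms)
qed

lemma tensor_op_diff_right:
  assumes "bounded_op a" "bounded_op c" "bounded_op d" "F \<in> l2"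
  shows "tensor_op a (\<lambda>f i. c f i - d f i) F = (\<lambda>p. tensor_op a c F p - tensor_op a d F p)"
proof -
  have "right_ext (\<lambda>f i. c f i - d f i) F = (\<lambda>p. right_ext c F p - right_ext d F p)"
    by (auto simp: right_ext_def)
  then show ?thesis
    unfolding tensor_op_apply
    by (simp add: bounded_op_apply_diff[OF bounded_op_left_ext[OF assms(1)]]
        right_ext_l2_bound assms)
qed

lemma tensor_op_comp_symmetrization:
  assumes a: "bounded_op a" and b: "bounded_op b" and c: "bounded_op c" and d: "bounded_op d"
    and F: "F \<in> l2"
  shows "tensor_op (\<lambda>f. a (b f)) (\<lambda>f. c (d f)) F p + tensor_op (\<lambda>f. b (a f)) (\<lambda>f. d (c f)) F p
    = 1/2 * (tensor_op (commutator a b) (commutator c d) F p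
           + tensor_op (anticommutator a b) (anticommutator c d) F p)"
proof -
  have ab: "bounded_op (\<lambda>f. a (b f))" and ba: "bounded_op (\<lambda>f. b (a f))"
    and cd: "bounded_op (\<lambda>f. c (d f))" and dc: "bounded_op (\<lambda>f. d (c f))"
    using bounded_op_comp a b c d by blast+
  show ?thesis
    unfolding commutator_def anticommutator_def tensor_op_diff_left tensor_op_add_left
      tensor_op_diff_right[OF ab cd dc F] tensor_op_diff_right[OF ba cd dc F]
      tensor_op_add_right[OF ab cd dc F] tensor_op_add_right[OF ba cd dc F]
    by (simp add: field_simps)
qed

lemma l2_norm_tensor_op_contraction_le:
  assumes "contraction x" "contraction y" "F \<in> l2"
  shows "l2_norm (tensor_op x y F) \<le> l2_norm F"
proof -
  have x: "bounded_op x" "op_norm x \<le> 1" and y: "bounded_op y" "op_norm y \<le> 1"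
    using assms(1,2) by (simp_all add: contraction_def)
  have "l2_norm (tensor_op x y F) \<le> op_norm x * op_norm y * l2_norm F"
    by (rule tensor_op_l2_bound(2)[OF x(1) y(1) assms(3)])
  also have "\<dots> \<le> 1 * l2_norm F"
    using x y by (intro mult_right_mono mult_le_one op_norm_nonneg l2_norm_nonneg)
  finally show ?thesis by simp
qed

lemma sum_lessThan_square_split:
  fixes p :: "nat \<Rightarrow> nat \<Rightarrow> 'a::comm_monoid_add"
  shows "(\<Sum>k<m. \<Sum>l<m. p k l) = (\<Sum>k<m. p k k) + (\<Sum>j<m. \<Sum>i<j. p i j + p j i)"
  by (induction m) (simp_all add: sum.distrib ac_simps)

section \<open>The Bell operator\<close>

definition bell_op :: "nat \<Rightarrow> (nat \<Rightarrow> 'i op) \<Rightarrow> (nat \<Rightarrow> 'j op) \<Rightarrow> ('i \<times> 'j) op" where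
  "bell_op m xs ys = op_sum m (\<lambda>k. tensor_op (xs k) (ys k))"

lemma bell_op_square:
  assumes xs: "\<And>k. k < m \<Longrightarrow> self_adjoint (xs k)" and ys: "\<And>k. k < m \<Longrightarrow> self_adjoint (ys k)"
    and F: "F \<in> l2"
  shows "bell_op m xs ys (bell_op m xs ys F) = (\<lambda>p.
      (\<Sum>k<m. tensor_op (xs k) (ys k) (tensor_op (xs k) (ys k) F) p)
    + (\<Sum>j<m. \<Sum>i<j. 1/2 * (tensor_op (commutator (xs i) (xs j)) (commutator (ys i) (ys j)) F p
                          + tensor_op (anticommutator (xs i) (xs j)) (anticommutator (ys i) (ys j)) F p)))"
proof -
  define T where "T k = tensor_op (xs k) (ys k)" for k
  have x_bdd: "bounded_op (xs k)" and y_bdd: "bounded_op (ys k)" if "k < m" for k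
    using xs ys that by (simp_all add: self_adjoint_bounded)
  have T_bdd: "bounded_op (T k)" if "k < m" for k
    unfolding T_def by (rule bounded_op_tensor_op[OF x_bdd y_bdd, OF that that])
  have TF: "T l F \<in> l2" if "l < m" for l
    by (rule bounded_op_in_l2[OF T_bdd[OF that] F])
  have TT: "T i (T j F) p + T j (T i F) p
      = 1/2 * (tensor_op (commutator (xs i) (xs j)) (commutator (ys i) (ys j)) F p
             + tensor_op (anticommutator (xs i) (xs j)) (anticommutator (ys i) (ys j)) F p)"
    if "i < m" "j < m" for i j p
    unfolding T_def tensor_op_comp[OF xs ys y_bdd F, OF that(2) that(1) that(2)]
      tensor_op_comp[OF xs ys y_bdd F, OF that(1) that(2) that(1)]
    by (rule tensor_op_comp_symmetrization[OF x_bdd x_bdd y_bdd y_bdd F, OF that that])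
  have "bell_op m xs ys (bell_op m xs ys F) = (\<lambda>p. \<Sum>k<m. T k (\<lambda>p. \<Sum>l<m. T l F p) p)"
    by (simp add: bell_op_def op_sum_def T_def)
  also have "\<dots> = (\<lambda>p. \<Sum>k<m. \<Sum>l<m. T k (T l F) p)"
    using bounded_op_apply_sum[OF T_bdd, of _ "{..<m}" "\<lambda>l. T l F"] TF by simp
  also have "\<dots> = (\<lambda>p. (\<Sum>k<m. T k (T k F) p) + (\<Sum>j<m. \<Sum>i<j. T i (T j F) p + T j (T i F) p))"
    by (simp only: sum_lessThan_square_split)
  finally show ?thesis
    by (auto simp: T_def[symmetric] TT intro!: sum.cong)
qed

lemma l2_norm_bell_op_square_le:
  assumes xs: "\<And>k. k < m \<Longrightarrow> self_adjoint (xs k) \<and> contraction (xs k)"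
    and ys: "\<And>k. k < m \<Longrightarrow> self_adjoint (ys k) \<and> contraction (ys k)"
    and F: "F \<in> l2"
  shows "l2_norm (bell_op m xs ys (bell_op m xs ys F)) \<le> (real m + 1/2 *
           (\<Sum>j<m. \<Sum>i<j.
              op_norm (commutator (xs i) (xs j)) * op_norm (commutator (ys i) (ys j))
            + op_norm (anticommutator (xs i) (xs j)) * op_norm (anticommutator (ys i) (ys j)))) * l2_norm F"
proof -
  have x_bdd: "bounded_op (xs k)" and y_bdd: "bounded_op (ys k)" if "k < m" for k
    using xs[OF that] ys[OF that] by (simp_all add: self_adjoint_bounded)
  define D where "D k = tensor_op (xs k) (ys k) (tensor_op (xs k) (ys k) F)" for k
  define c where "c i j = op_norm (commutator (xs i) (xs j)) * op_norm (commutator (ys i) (ys j))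
    + op_norm (anticommutator (xs i) (xs j)) * op_norm (anticommutator (ys i) (ys j))" for i j
  define E where "E i j = (\<lambda>p. 1/2 * (tensor_op (commutator (xs i) (xs j)) (commutator (ys i) (ys j)) F p
    + tensor_op (anticommutator (xs i) (xs j)) (anticommutator (ys i) (ys j)) F p))" for i j
  have D: "D k \<in> l2" "l2_norm (D k) \<le> l2_norm F" if "k < m" for k
  proof -
    have x: "contraction (xs k)" and y: "contraction (ys k)" using xs[OF that] ys[OF that] by auto
    note TF = tensor_op_l2_bound(1)[OF x_bdd y_bdd F, OF that that]
    show "D k \<in> l2"
      unfolding D_def by (rule tensor_op_l2_bound(1)[OF x_bdd y_bdd TF, OF that that])
    have "l2_norm (D k) \<le> l2_norm (tensor_op (xs k) (ys k) F)"
      unfolding D_def by (rule l2_norm_tensor_op_contraction_le[OF x y TF])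
    also have "\<dots> \<le> l2_norm F" by (rule l2_norm_tensor_op_contraction_le[OF x y F])
    finally show "l2_norm (D k) \<le> l2_norm F" .
  qed
  have E: "E i j \<in> l2" "l2_norm (E i j) \<le> 1/2 * c i j * l2_norm F" if "i < m" "j < m" for i j
  proof -
    have cx: "bounded_op (commutator (xs i) (xs j))" "bounded_op (anticommutator (xs i) (xs j))"
      and cy: "bounded_op (commutator (ys i) (ys j))" "bounded_op (anticommutator (ys i) (ys j))"
      using x_bdd y_bdd that by (simp_all add: bounded_op_commutator bounded_op_anticommutator)
    note comm = tensor_op_l2_bound[OF cx(1) cy(1) F] and anti = tensor_op_l2_bound[OF cx(2) cy(2) F]
    show "E i j \<in> l2" unfolding E_def by (intro l2_cmult(1) l2_add comm(1) anti(1))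
    have "l2_norm (E i j)
        \<le> 1/2 * (l2_norm (tensor_op (commutator (xs i) (xs j)) (commutator (ys i) (ys j)) F)
          + l2_norm (tensor_op (anticommutator (xs i) (xs j)) (anticommutator (ys i) (ys j)) F))"
      unfolding E_def l2_cmult(2)[OF l2_add[OF comm(1) anti(1)]]
      using l2_norm_triangle[OF comm(1) anti(1)] by simp
    also have "\<dots> \<le> 1/2 * c i j * l2_norm F"
      using comm(2) anti(2) by (simp add: c_def algebra_simps)
    finally show "l2_norm (E i j) \<le> 1/2 * c i j * l2_norm F" .
  qed
  have "l2_norm (bell_op m xs ys (bell_op m xs ys F))
      = l2_norm (\<lambda>p. (\<Sum>k<m. D k p) + (\<Sum>j<m. \<Sum>i<j. E i j p))"
    using xs ys by (simp add: bell_op_square F D_def E_def)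
  also have "\<dots> \<le> (\<Sum>k<m. l2_norm F) + (\<Sum>j<m. \<Sum>i<j. 1/2 * c i j * l2_norm F)"
    using D E by (intro order_trans[OF l2_norm_triangle] add_mono l2_norm_sum_le l2_sum) auto
  also have "\<dots> = (real m + 1/2 * (\<Sum>j<m. \<Sum>i<j. c i j)) * l2_norm F"
    by (simp add: algebra_simps sum_distrib_left sum_distrib_right)
  finally show ?thesis by (simp add: c_def)
qed

lemma power2_op_norm_bell_op_le:
  assumes xs: "\<And>k. k < m \<Longrightarrow> self_adjoint (xs k) \<and> contraction (xs k)"
    and ys: "\<And>k. k < m \<Longrightarrow> self_adjoint (ys k) \<and> contraction (ys k)"
  shows "(op_norm (bell_op m xs ys))\<^sup>2 \<le> real m + 1/2 *
           (\<Sum>j<m. \<Sum>i<j.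
              op_norm (commutator (xs i) (xs j)) * op_norm (commutator (ys i) (ys j))
            + op_norm (anticommutator (xs i) (xs j)) * op_norm (anticommutator (ys i) (ys j)))"
proof -
  have x_bdd: "bounded_op (xs k)" and y_bdd: "bounded_op (ys k)" if "k < m" for k
    using xs[OF that] ys[OF that] by (simp_all add: self_adjoint_bounded)
  have "self_adjoint (bell_op m xs ys)"
    unfolding bell_op_def using xs ys by (intro self_adjoint_op_sum self_adjoint_tensor_op) auto
  then have "(op_norm (bell_op m xs ys))\<^sup>2 \<le> op_norm (\<lambda>F. bell_op m xs ys (bell_op m xs ys F))"
    by (rule power2_op_norm_le_op_norm_square)
  also have "\<dots> \<le> real m + 1/2 *
           (\<Sum>j<m. \<Sum>i<j.
              op_norm (commutator (xs i) (xs j)) * op_norm (commutator (ys i) (ys j))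
            + op_norm (anticommutator (xs i) (xs j)) * op_norm (anticommutator (ys i) (ys j)))"
    using x_bdd y_bdd
    by (intro op_norm_leI l2_norm_bell_op_square_le xs ys add_nonneg_nonneg mult_nonneg_nonneg
        sum_nonneg op_norm_nonneg bounded_op_commutator bounded_op_anticommutator) auto
  finally show ?thesis .
qed

theorem theorem2p1:
  fixes xs :: "nat \<Rightarrow> 'i op" and ys :: "nat \<Rightarrow> 'j op" and m :: nat
  assumes "m \<ge> 1"
    and "\<And>i. i < m \<Longrightarrow> self_adjoint (xs i) \<and> contraction (xs i)"
    and "\<And>i. i < m \<Longrightarrow> self_adjoint (ys i) \<and> contraction (ys i)"
  shows "((op_norm (op_sum m (\<lambda>i. tensor_op (xs i) (ys i))))\<^sup>2 \<le> real m + 1/2 *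
           (\<Sum>j<m. \<Sum>i<j.
              op_norm (commutator (xs i) (xs j)) * op_norm (commutator (ys i) (ys j))
            + op_norm (anticommutator (xs i) (xs j)) * op_norm (anticommutator (ys i) (ys j))))
     \<and> ((\<forall>j<m. \<forall>i<j. (\<forall>f\<in>l2. anticommutator (xs i) (xs j) f = (\<lambda>_. 0))
                       \<or> (\<forall>f\<in>l2. anticommutator (ys i) (ys j) f = (\<lambda>_. 0))) \<longrightarrow>
         (op_norm (op_sum m (\<lambda>i. tensor_op (xs i) (ys i))))\<^sup>2 \<le> real m + 1/2 *
           (\<Sum>j<m. \<Sum>i<j.
              op_norm (commutator (xs i) (xs j)) * op_norm (commutator (ys i) (ys j))))"
proof -
  define cc aa where
    "cc i j = op_norm (commutator (xs i) (xs j)) * op_norm (commutator (ys i) (ys j))" and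
    "aa i j = op_norm (anticommutator (xs i) (xs j)) * op_norm (anticommutator (ys i) (ys j))"
    for i j
  have "(op_norm (op_sum m (\<lambda>i. tensor_op (xs i) (ys i))))\<^sup>2
      \<le> real m + 1/2 * (\<Sum>j<m. \<Sum>i<j. cc i j + aa i j)"
    using power2_op_norm_bell_op_le[of m xs ys, OF assms(2,3)]
    by (simp add: bell_op_def cc_def aa_def)
  moreover have "(\<Sum>j<m. \<Sum>i<j. cc i j + aa i j) = (\<Sum>j<m. \<Sum>i<j. cc i j)"
    if anti: "\<forall>j<m. \<forall>i<j. (\<forall>f\<in>l2. anticommutator (xs i) (xs j) f = (\<lambda>_. 0))
                           \<or> (\<forall>f\<in>l2. anticommutator (ys i) (ys j) f = (\<lambda>_. 0))"
  proof (intro sum.cong refl)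
    fix i j assume "j \<in> {..<m}" "i \<in> {..<j}"
    with anti have "(\<forall>f\<in>l2. anticommutator (xs i) (xs j) f = (\<lambda>_. 0))
                  \<or> (\<forall>f\<in>l2. anticommutator (ys i) (ys j) f = (\<lambda>_. 0))" by simp
    then have "aa i j = 0" unfolding aa_def by (auto intro: op_norm_eq_0I)
    then show "cc i j + aa i j = cc i j" by simp
  qed
  ultimately show ?thesis unfolding cc_def aa_def by auto
qed

end
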